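(* With the notation of the context, let $x^*\in\Delta$ satisfy $F(x^* )=\inf_{x\in\Delta}F(x)$. Then there exist $a^*,b^*,c^*\in(0,1)$ such that $x^*(\psi)=a^*$ for every $\psi$ of type 1, $x^*(\psi)=b^*$ for every $\psi$ of type 2, 3 or 5, and $x^*(\psi)=c^*$ for every $\psi$ of type 4.
   Context: Fix an integer $n\ge2$ and free generators $\xi_1,\dots,\xi_n$ of a free group; throughout $i,j,k\in\{1,\dots,n\}$ and $t,s,p\in\{-1,+1\}$. Let $\Psi$ be the set of reduced words $\xi_i^{2t}$; $\xi_i^t\xi_j^{2s}$ ($i\ne j$); $\xi_i^t\xi_j^s\xi_k^p$ ($i\ne j$, $j\ne k$). Types: type 1 $=\xi_i^{2t}$; type 2 $=\xi_i^t\xi_j^{2s}$; type 3 $=\xi_i^t\xi_j^s\xi_i^t$; type 4 $=\xi_i^t\xi_j^s\xi_i^{-t}$; type 5 $=\xi_i^t\xi_j^s\xi_k^p$ with $i,j,k$ pairwise distinct. For a letter $\xi_a^x$ let $S(\xi_a^x)\subset\Psi$ be the set of words in $\Psi$ beginning with $\xi_a^x$, namely $\{\xi_a^{2x}\}\cup\{\xi_a^x\xi_j^{2s}\}\cup\{\xi_a^x\xi_j^s\xi_k^p\}$; for $a\ne b$ let $S(\xi_a^x\xi_b^y)=\{\xi_a^x\xi_b^{2y}\}\cup\{\xi_a^x\xi_b^y\xi_k^p: k\ne b\}$. A relation $r$ is a pair $(\psi_r,\Psi_r)$ with $\psi_r\in\Psi$, $\Psi_r\subseteq\Psi$. Let $\mathcal{F}$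 be the collection of the following relations (indices $i_0\ne j_0$, in type 5a $i_0,j_0,k_0$ pairwise distinct, all signs arbitrary): 1a: $\psi_r=\xi_{i_0}^{2t_0}$, $\Psi_r=\Psi\setminus S(\xi_{i_0}^{t_0})$; 2b: $\psi_r=\xi_{i_0}^{t_0}\xi_{j_0}^{2s_0}$, $\Psi_r=\Psi\setminus S(\xi_{i_0}^{t_0}\xi_{j_0}^{s_0})$; 3a: $\psi_r=\xi_{i_0}^{t_0}\xi_{j_0}^{s_0}\xi_{i_0}^{t_0}$, $\Psi_r=\Psi\setminus S(\xi_{j_0}^{s_0}\xi_{i_0}^{t_0})$; 4b: $\psi_r=\xi_{i_0}^{t_0}\xi_{j_0}^{s_0}\xi_{i_0}^{-t_0}$, $\Psi_r=S(\xi_{i_0}^{t_0})$; 5a: $\psi_r=\xi_{i_0}^{t_0}\xi_{j_0}^{s_0}\xi_{k_0}^{p_0}$, $\Psi_r=\Psi\setminus S(\xi_{j_0}^{s_0}\xi_{k_0}^{p_0})$. Let $\Delta=\{x\in\mathbb{R}^\Psi: x(\psi)>0\ \forall\psi,\ \sum_{\psi}x(\psi)=1\}$. For a relation $r$ and $x\in\Delta$ put $x_r=x(\psi_r)$, $X_r=\sum_{\psi\in\Psi_r}x(\psi)$, $f_r(x)=\frac{1-x_r}{x_r}\cdot\frac{1-X_r}{X_r}$, and $F(x)=\max_{r\in\mathcal{F}}f_r(x)$. *)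

theory Defs
  imports Complex_Main
begin

text \<open>A letter xi_i^t is encoded as the pair (i, t) with i in {1..n} and t in {-1, 1}.
  A reduced word is encoded as the list of its letters; e.g. xi_i^{2t} is [(i,t),(i,t)].\<close>

type_synonym letter = "nat \<times> int"
type_synonym word = "letter list"

definition sgns :: "int set" where "sgns = {-1, 1}"

definition Psi :: "nat \<Rightarrow> word set" where
  "Psi n =
     {[(i,t),(i,t)] | i t. i \<in> {1..n} \<and> t \<in> sgns}
   \<union> {[(i,t),(j,s),(j,s)] | i j t s. i \<in> {1..n} \<and> j \<in> {1..n} \<and> i \<noteq> j \<and> t \<in> sgns \<and> s \<in> sgns}
   \<union> {[(i,t),(j,s),(k,p)] | i j k t s p. i \<in> {1..n} \<and> j \<in> {1..n} \<and> k \<in> {1..n}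
        \<and> i \<noteq> j \<and> j \<noteq> k \<and> t \<in> sgns \<and> s \<in> sgns \<and> p \<in> sgns}"

definition type1 :: "word \<Rightarrow> bool" where
  "type1 w \<longleftrightarrow> (\<exists>i t. w = [(i,t),(i,t)])"
definition type2 :: "word \<Rightarrow> bool" where
  "type2 w \<longleftrightarrow> (\<exists>i j t s. i \<noteq> j \<and> w = [(i,t),(j,s),(j,s)])"
definition type3 :: "word \<Rightarrow> bool" where
  "type3 w \<longleftrightarrow> (\<exists>i j t s. i \<noteq> j \<and> w = [(i,t),(j,s),(i,t)])"
definition type4 :: "word \<Rightarrow> bool" where
  "type4 w \<longleftrightarrow> (\<exists>i j t s. i \<noteq> j \<and> w = [(i,t),(j,s),(i,-t)])"
definition type5 :: "word \<Rightarrow> bool" where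
  "type5 w \<longleftrightarrow> (\<exists>i j k t s p. i \<noteq> j \<and> j \<noteq> k \<and> i \<noteq> k \<and> w = [(i,t),(j,s),(k,p)])"

definition S1 :: "nat \<Rightarrow> nat \<Rightarrow> int \<Rightarrow> word set" where
  "S1 n a x =
     {[(a,x),(a,x)]}
   \<union> {[(a,x),(j,s),(j,s)] | j s. j \<in> {1..n} \<and> j \<noteq> a \<and> s \<in> sgns}
   \<union> {[(a,x),(j,s),(k,p)] | j s k p. j \<in> {1..n} \<and> k \<in> {1..n} \<and> j \<noteq> a \<and> j \<noteq> k
        \<and> s \<in> sgns \<and> p \<in> sgns}"

definition S2 :: "nat \<Rightarrow> nat \<Rightarrow> int \<Rightarrow> nat \<Rightarrow> int \<Rightarrow> word set" where
  "S2 n a x b y =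
     {[(a,x),(b,y),(b,y)]}
   \<union> {[(a,x),(b,y),(k,p)] | k p. k \<in> {1..n} \<and> k \<noteq> b \<and> p \<in> sgns}"

definition rels :: "nat \<Rightarrow> (word \<times> word set) set" where
  "rels n =
     {([(i0,t0),(i0,t0)], Psi n - S1 n i0 t0) | i0 t0. i0 \<in> {1..n} \<and> t0 \<in> sgns}
   \<union> {([(i0,t0),(j0,s0),(j0,s0)], Psi n - S2 n i0 t0 j0 s0) | i0 j0 t0 s0.
        i0 \<in> {1..n} \<and> j0 \<in> {1..n} \<and> i0 \<noteq> j0 \<and> t0 \<in> sgns \<and> s0 \<in> sgns}
   \<union> {([(i0,t0),(j0,s0),(i0,t0)], Psi n - S2 n j0 s0 i0 t0) | i0 j0 t0 s0.
        i0 \<in> {1..n} \<and> j0 \<in> {1..n} \<and> i0 \<noteq> j0 \<and> t0 \<in> sgns \<and> s0 \<in> sgns}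
   \<union> {([(i0,t0),(j0,s0),(i0,-t0)], S1 n i0 t0) | i0 j0 t0 s0.
        i0 \<in> {1..n} \<and> j0 \<in> {1..n} \<and> i0 \<noteq> j0 \<and> t0 \<in> sgns \<and> s0 \<in> sgns}
   \<union> {([(i0,t0),(j0,s0),(k0,p0)], Psi n - S2 n j0 s0 k0 p0) | i0 j0 k0 t0 s0 p0.
        i0 \<in> {1..n} \<and> j0 \<in> {1..n} \<and> k0 \<in> {1..n} \<and> i0 \<noteq> j0 \<and> j0 \<noteq> k0 \<and> i0 \<noteq> k0
        \<and> t0 \<in> sgns \<and> s0 \<in> sgns \<and> p0 \<in> sgns}"

text \<open>The open simplex Delta (values of x outside Psi are irrelevant).\<close>
definition Delta :: "nat \<Rightarrow> (word \<Rightarrow> real) set" where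
  "Delta n = {x. (\<forall>\<psi>\<in>Psi n. x \<psi> > 0) \<and> (\<Sum>\<psi>\<in>Psi n. x \<psi>) = 1}"

definition frel :: "word \<times> word set \<Rightarrow> (word \<Rightarrow> real) \<Rightarrow> real" where
  "frel r x = (let xr = x (fst r); Xr = (\<Sum>\<psi>\<in>snd r. x \<psi>) in
               ((1 - xr) / xr) * ((1 - Xr) / Xr))"

definition FF :: "nat \<Rightarrow> (word \<Rightarrow> real) \<Rightarrow> real" where
  "FF n x = Max ((\<lambda>r. frel r x) ` rels n)"

end

theory Submission
  imports Defs
begin

(*
  Let x be the minimizer, M = F(x) and H(v) = threshold M v = v / (v + M (1 - v)).  The
  inequality f_r(x) <= M says exactly that x(psi_r) >= H(1 - X_r), and M > 1, so H is increasing
  and strictly convex on [0, 1].  Summing these lower bounds over the words of type 1, of type 4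
  and of types 2, 3, 5, and applying Jensen's inequality to the prefix masses, bounds the total
  weight of each class from below by H at the average prefix mass.  If the bound for type 4 or
  for types 2, 3, 5 were slack, a point constant on the three classes, with the surplus moved to
  type 1, would have F < M, contradicting minimality.  So both bounds are attained; by strict
  convexity every prefix mass then equals its average and every word of types 2 to 5 attains its
  lower bound, which is a common value per class.  The type-1 words share what is left of the
  mass of each S(xi).
*)

section \<open>Convexity of the threshold function\<close>

lemma sum_mono_eq:
  fixes f g :: "'a \<Rightarrow> real"
  assumes "finite A" "\<And>i. i \<in> A \<Longrightarrow> f i \<le> g i" "sum g A \<le> sum f A" "i \<in> A"
  shows "f i = g i"
proof (rule ccontr)
  assume "f i \<noteq> g i"
  then have "sum f A < sum g A"
    using assms by (intro sum_strict_mono_ex1) (auto intro: le_neq_trans)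
  then show False using assms(3) by simp
qed

lemma sum_sum_mono_eq:
  fixes f g :: "'a \<Rightarrow> 'b \<Rightarrow> real"
  assumes "finite A" "\<And>a. a \<in> A \<Longrightarrow> finite (B a)" "\<And>a b. a \<in> A \<Longrightarrow> b \<in> B a \<Longrightarrow> f a b \<le> g a b"
    and "(\<Sum>a\<in>A. \<Sum>b\<in>B a. g a b) \<le> (\<Sum>a\<in>A. \<Sum>b\<in>B a. f a b)" "a \<in> A" "b \<in> B a"
  shows "f a b = g a b"
proof -
  have "(\<Sum>b\<in>B a. f a b) = (\<Sum>b\<in>B a. g a b)"
    by (rule sum_mono_eq[OF assms(1) _ assms(4,5)]) (use assms(3) in \<open>auto intro: sum_mono\<close>)
  then show ?thesis
    by (intro sum_mono_eq[OF assms(2)[OF assms(5)] _ _ assms(6)]) (use assms(3,5) in auto)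
qed

lemma tangent_jensen:
  fixes f :: "real \<Rightarrow> real" and u :: "'a \<Rightarrow> real" and v K :: real
  assumes "finite I" and mean: "(\<Sum>i\<in>I. u i) = card I * v"
    and tangent: "\<And>i. i \<in> I \<Longrightarrow> f v + K * (u i - v) \<le> f (u i)"
  shows "card I * f v \<le> (\<Sum>i\<in>I. f (u i))"
    and "(\<Sum>i\<in>I. f (u i)) \<le> card I * f v \<Longrightarrow>
         (\<And>i. i \<in> I \<Longrightarrow> u i \<noteq> v \<Longrightarrow> f v + K * (u i - v) < f (u i)) \<Longrightarrow>
         i \<in> I \<Longrightarrow> u i = v"
proof -
  have tangent_sum: "(\<Sum>i\<in>I. f v + K * (u i - v)) = card I * f v"
    using mean by (simp add: sum.distrib sum_subtractf flip: sum_distrib_left)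
  then show "card I * f v \<le> (\<Sum>i\<in>I. f (u i))"
    using sum_mono[of I "\<lambda>i. f v + K * (u i - v)", OF tangent] by simp
  assume "(\<Sum>i\<in>I. f (u i)) \<le> card I * f v"
    and strict: "\<And>i. i \<in> I \<Longrightarrow> u i \<noteq> v \<Longrightarrow> f v + K * (u i - v) < f (u i)"
    and "i \<in> I"
  then have "f v + K * (u i - v) = f (u i)"
    using tangent_sum by (intro sum_mono_eq[OF \<open>finite I\<close> tangent]) auto
  then show "u i = v" using strict[OF \<open>i \<in> I\<close>] by fastforce
qed

definition threshold :: "real \<Rightarrow> real \<Rightarrow> real" where
  "threshold M v = v / (v + M * (1 - v))"

lemma threshold_denominator_pos:
  fixes M v :: real
  assumes "0 < M" "0 \<le> v" "v \<le> 1"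
  shows "0 < v + M * (1 - v)"
proof (cases "v = 1")
  case False
  then have "0 < M * (1 - v)" using assms by simp
  then show ?thesis using assms by linarith
qed simp

lemma threshold_pos: "0 < M \<Longrightarrow> 0 < v \<Longrightarrow> v \<le> 1 \<Longrightarrow> 0 < threshold M v"
  unfolding threshold_def by (simp add: threshold_denominator_pos)

lemma threshold_mono:
  assumes "0 < M" "0 \<le> v" "v \<le> w" "w \<le> 1"
  shows "threshold M v \<le> threshold M w"
proof -
  have pos: "0 < v + M * (1 - v)" "0 < w + M * (1 - w)"
    using assms by (auto intro: threshold_denominator_pos)
  have "M * v \<le> M * w" using assms by simp
  then have "v * (w + M * (1 - w)) \<le> w * (v + M * (1 - v))"
    by (simp add: algebra_simps)
  then show ?thesis
    unfolding threshold_def using pos by (simp add: divide_le_eq le_divide_eq mult.commute)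
qed

lemma threshold_tangent:
  fixes M u v :: real
  assumes "1 < M" "0 \<le> u" "u \<le> 1" "0 \<le> v" "v \<le> 1"
  defines "K \<equiv> M / (v + M * (1 - v))\<^sup>2"
  shows "threshold M u - (threshold M v + K * (u - v))
    = M * (M - 1) * (u - v)\<^sup>2 / ((u + M * (1 - u)) * (v + M * (1 - v))\<^sup>2)"
proof -
  define a where "a = u + M * (1 - u)"
  define b where "b = v + M * (1 - v)"
  have "a \<noteq> 0" "b \<noteq> 0"
    using assms threshold_denominator_pos[of M] unfolding a_def b_def by force+
  then have "u / a - (v / b + M / b\<^sup>2 * (u - v))
      = (u * b\<^sup>2 - v * a * b - M * (u - v) * a) / (a * b\<^sup>2)"
    by (simp add: field_simps power2_eq_square)
  also have "u * b\<^sup>2 - v * a * b - M * (u - v) * a = M * (M - 1) * (u - v)\<^sup>2"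
    unfolding a_def b_def by (simp add: power2_eq_square algebra_simps)
  finally show ?thesis
    unfolding threshold_def K_def a_def b_def .
qed

lemma threshold_jensen:
  fixes u :: "'a \<Rightarrow> real" and M v :: real
  assumes "finite I" "1 < M" "\<And>i. i \<in> I \<Longrightarrow> 0 \<le> u i \<and> u i \<le> 1" "0 \<le> v" "v \<le> 1"
    and mean: "(\<Sum>i\<in>I. u i) = card I * v"
  shows "card I * threshold M v \<le> (\<Sum>i\<in>I. threshold M (u i))"
    and "(\<Sum>i\<in>I. threshold M (u i)) \<le> card I * threshold M v \<Longrightarrow> i \<in> I \<Longrightarrow> u i = v"
proof -
  define K where "K = M / (v + M * (1 - v))\<^sup>2"
  have tangent: "threshold M v + K * (u i - v) \<le> threshold M (u i)"
    and strict: "u i \<noteq> v \<Longrightarrow> threshold M v + K * (u i - v) < threshold M (u i)"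
    if "i \<in> I" for i
  proof -
    have "0 \<le> u i" "u i \<le> 1" using assms(3) that by auto
    define Q where "Q = (u i + M * (1 - u i)) * (v + M * (1 - v))\<^sup>2"
    have eq: "threshold M (u i) - (threshold M v + K * (u i - v)) = M * (M - 1) * (u i - v)\<^sup>2 / Q"
      unfolding K_def Q_def using assms \<open>0 \<le> u i\<close> \<open>u i \<le> 1\<close> by (intro threshold_tangent) auto
    have "0 < Q"
      using \<open>0 \<le> u i\<close> \<open>u i \<le> 1\<close> assms unfolding Q_def
      by (intro mult_pos_pos zero_less_power threshold_denominator_pos) auto
    moreover have "0 < M * (M - 1)" using assms by simp
    ultimately have "0 \<le> M * (M - 1) * (u i - v)\<^sup>2 / Q"
      and "u i \<noteq> v \<Longrightarrow> 0 < M * (M - 1) * (u i - v)\<^sup>2 / Q"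
      by simp_all
    then show "threshold M v + K * (u i - v) \<le> threshold M (u i)"
      and "u i \<noteq> v \<Longrightarrow> threshold M v + K * (u i - v) < threshold M (u i)"
      unfolding eq[symmetric] by simp_all
  qed
  show "card I * threshold M v \<le> (\<Sum>i\<in>I. threshold M (u i))"
    using tangent_jensen(1)[OF assms(1) mean tangent] .
  show "u i = v" if "(\<Sum>i\<in>I. threshold M (u i)) \<le> card I * threshold M v" "i \<in> I"
    using tangent_jensen(2)[OF assms(1) mean tangent that(1) strict that(2)] .
qed

lemma frel_threshold_iff:
  fixes x :: "word \<Rightarrow> real"
  assumes "0 < M" "0 < x w" "x w < 1" "0 < (\<Sum>v\<in>W. x v)" "(\<Sum>v\<in>W. x v) < 1"
  shows "frel (w, W) x \<le> M \<longleftrightarrow> threshold M (1 - (\<Sum>v\<in>W. x v)) \<le> x w"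
    and "frel (w, W) x < M \<longleftrightarrow> threshold M (1 - (\<Sum>v\<in>W. x v)) < x w"
proof -
  define X where "X = (\<Sum>v\<in>W. x v)"
  have frel: "frel (w, W) x = (1 - x w) * (1 - X) / (x w * X)"
    by (simp add: frel_def X_def Let_def)
  have pos: "0 < x w * X" "0 < 1 - X + M * X"
    using assms by (simp_all add: X_def add_pos_pos)
  have "(1 - x w) * (1 - X) \<le> M * (x w * X) \<longleftrightarrow> 1 - X \<le> x w * (1 - X + M * X)"
    "(1 - x w) * (1 - X) < M * (x w * X) \<longleftrightarrow> 1 - X < x w * (1 - X + M * X)"
    by (simp_all add: algebra_simps)
  then show "frel (w, W) x \<le> M \<longleftrightarrow> threshold M (1 - X) \<le> x w"
    and "frel (w, W) x < M \<longleftrightarrow> threshold M (1 - X) < x w"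
    unfolding frel threshold_def using pos
    by (simp_all add: pos_divide_le_eq pos_divide_less_eq mult.commute)
qed

definition letters :: "nat \<Rightarrow> letter set" where
  "letters n = {1..n} \<times> sgns"

definition other_letters :: "nat \<Rightarrow> letter \<Rightarrow> letter set" where
  "other_letters n l = {m \<in> letters n. fst m \<noteq> fst l}"

definition inv_letter :: "letter \<Rightarrow> letter" where
  "inv_letter l = (fst l, - snd l)"

lemma finite_letters [simp]: "finite (letters n)"
  by (simp add: letters_def sgns_def)

lemma card_letters: "card (letters n) = 2 * n"
  by (simp add: letters_def sgns_def card_cartesian_product)

lemma finite_other_letters [simp]: "finite (other_letters n l)"
  by (simp add: other_letters_def)

lemma other_letters_eq: "other_letters n l = ({1..n} - {fst l}) \<times> sgns"
  by (auto simp: other_letters_def letters_def)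

lemma card_other_letters:
  assumes "l \<in> letters n"
  shows "real (card (other_letters n l)) = 2 * real n - 2"
proof -
  have "1 \<le> n" using assms by (auto simp: letters_def)
  then show ?thesis
    using assms
    by (auto simp: other_letters_eq letters_def sgns_def card_cartesian_product of_nat_diff)
qed

lemma other_letters_subset: "other_letters n l \<subseteq> letters n"
  by (auto simp: other_letters_def)

lemma other_letters_sym: "l \<in> letters n \<Longrightarrow> m \<in> other_letters n l \<Longrightarrow> l \<in> other_letters n m"
  by (auto simp: other_letters_def)

lemma inv_letter_in_letters: "l \<in> letters n \<Longrightarrow> inv_letter l \<in> letters n"
  by (auto simp: letters_def inv_letter_def sgns_def)

lemma inv_letter_in_other_letters:
  "l \<in> letters n \<Longrightarrow> m \<in> other_letters n l \<Longrightarrow> inv_letter l \<in> other_letters n m"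
  by (auto simp: other_letters_def inv_letter_in_letters) (simp add: inv_letter_def)

lemma inv_letter_neq: "l \<in> letters n \<Longrightarrow> inv_letter l \<noteq> l"
  by (auto simp: letters_def inv_letter_def sgns_def)

lemma inv_letter_inv_letter [simp]: "inv_letter (inv_letter l) = l"
  by (simp add: inv_letter_def)

lemma letter_eq_or_inv:
  assumes "k \<in> letters n" "l \<in> letters n" "fst k = fst l"
  shows "k = l \<or> k = inv_letter l"
  using assms by (auto simp: letters_def sgns_def inv_letter_def prod_eq_iff)

lemma card_other_letters_remove:
  assumes "l \<in> letters n" "m \<in> other_letters n l"
  shows "real (card (other_letters n m - {inv_letter l})) = 2 * real n - 3"
proof -
  have m: "m \<in> letters n" using assms other_letters_subset by blast
  have inv: "inv_letter l \<in> other_letters n m" using inv_letter_in_other_letters[OF assms] .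
  then have "0 < card (other_letters n m)" using card_gt_0_iff by fastforce
  then show ?thesis using inv card_other_letters[OF m]
    by (simp add: card_Diff_singleton of_nat_diff)
qed

lemma sum_other_letters_swap:
  "(\<Sum>l\<in>letters n. \<Sum>m\<in>other_letters n l. g l m) = (\<Sum>m\<in>letters n. \<Sum>l\<in>other_letters n m. g l m)"
  using sum.swap_restrict[of "letters n" "letters n" g "\<lambda>l m. fst m \<noteq> fst l"]
  by (simp add: other_letters_def eq_commute)

lemma sum_other_letters_remove_inv:
  assumes "m \<in> letters n"
  shows "(\<Sum>l\<in>other_letters n m. \<Sum>k\<in>other_letters n m - {inv_letter l}. F k)
    = (2 * real n - 3) * (\<Sum>k\<in>other_letters n m. F k)"
proof -
  have "(\<Sum>l\<in>other_letters n m. \<Sum>k\<in>other_letters n m - {inv_letter l}. F k)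
      = (\<Sum>l\<in>other_letters n m. \<Sum>k\<in>{k \<in> other_letters n m. k \<noteq> inv_letter l}. F k)"
    by (intro sum.cong) auto
  also have "\<dots> = (\<Sum>k\<in>other_letters n m. \<Sum>l\<in>{l \<in> other_letters n m. k \<noteq> inv_letter l}. F k)"
    by (rule sum.swap_restrict) simp_all
  also have "\<dots> = (\<Sum>k\<in>other_letters n m. (2 * real n - 3) * F k)"
  proof (rule sum.cong)
    fix k assume k: "k \<in> other_letters n m"
    have "{l \<in> other_letters n m. k \<noteq> inv_letter l} = other_letters n m - {inv_letter k}"
      by auto
    moreover have "real (card (other_letters n m - {inv_letter k})) = 2 * real n - 3"
      using k assms other_letters_subset other_letters_sym
      by (intro card_other_letters_remove) blast+
    ultimately show "(\<Sum>l\<in>{l \<in> other_letters n m. k \<noteq> inv_letter l}. F k) = (2 * real n - 3) * F k"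
      by simp
  qed simp
  finally show ?thesis by (simp add: sum_distrib_left)
qed

lemma sum_other_letters_skip_inv:
  "(\<Sum>l\<in>letters n. \<Sum>m\<in>other_letters n l. \<Sum>k\<in>other_letters n m - {inv_letter l}. F m k)
    = (2 * real n - 3) * (\<Sum>m\<in>letters n. \<Sum>k\<in>other_letters n m. F m k)"
proof -
  have "(\<Sum>l\<in>letters n. \<Sum>m\<in>other_letters n l. \<Sum>k\<in>other_letters n m - {inv_letter l}. F m k)
      = (\<Sum>m\<in>letters n. \<Sum>l\<in>other_letters n m. \<Sum>k\<in>other_letters n m - {inv_letter l}. F m k)"
    by (rule sum_other_letters_swap)
  also have "\<dots> = (\<Sum>m\<in>letters n. (2 * real n - 3) * (\<Sum>k\<in>other_letters n m. F m k))"
    by (rule sum.cong) (simp_all add: sum_other_letters_remove_inv)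
  finally show ?thesis by (simp add: sum_distrib_left)
qed

lemma S2_eq:
  "S2 n (fst l) (snd l) (fst m) (snd m) = insert [l,m,m] ((\<lambda>k. [l,m,k]) ` other_letters n m)"
  by (auto simp: S2_def other_letters_def letters_def)

lemma S1_eq:
  "S1 n (fst l) (snd l) = insert [l,l] (\<Union>m\<in>other_letters n l. S2 n (fst l) (snd l) (fst m) (snd m))"
  by (auto simp: S1_def S2_def other_letters_def letters_def)

lemma Psi_eq: "Psi n = (\<Union>l\<in>letters n. S1 n (fst l) (snd l))"
  by (auto simp: Psi_def S1_def letters_def)

lemma finite_S2 [simp]: "finite (S2 n a t b s)"
  using S2_eq[of n "(a,t)" "(b,s)"] by simp

lemma finite_S1 [simp]: "finite (S1 n a t)"
  using S1_eq[of n "(a,t)"] by simp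

lemma finite_Psi [simp]: "finite (Psi n)"
  by (simp add: Psi_eq)

lemma word1_in_Psi: "l \<in> letters n \<Longrightarrow> [l,l] \<in> Psi n"
  by (cases l) (auto simp: Psi_def letters_def)

lemma word2_in_Psi: "l \<in> letters n \<Longrightarrow> m \<in> other_letters n l \<Longrightarrow> [l,m,m] \<in> Psi n"
  by (cases l, cases m) (auto simp: Psi_def letters_def other_letters_def)

lemma word3_in_Psi:
  "l \<in> letters n \<Longrightarrow> m \<in> other_letters n l \<Longrightarrow> k \<in> other_letters n m \<Longrightarrow> [l,m,k] \<in> Psi n"
  by (cases l, cases m, cases k) (auto simp: Psi_def letters_def other_letters_def)

lemma S1_subset_Psi: "l \<in> letters n \<Longrightarrow> S1 n (fst l) (snd l) \<subseteq> Psi n"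
  by (auto simp: Psi_eq)

lemma S2_subset_Psi:
  "l \<in> letters n \<Longrightarrow> m \<in> other_letters n l \<Longrightarrow> S2 n (fst l) (snd l) (fst m) (snd m) \<subseteq> Psi n"
  by (auto simp: S2_eq intro: word2_in_Psi word3_in_Psi)

lemma Psi_cases:
  assumes "w \<in> Psi n"
  obtains (word1) l where "l \<in> letters n" "w = [l,l]"
  | (word2) l m where "l \<in> letters n" "m \<in> other_letters n l" "w = [l,m,m]"
  | (word3) l m k where "l \<in> letters n" "m \<in> other_letters n l" "k \<in> other_letters n m"
      "w = [l,m,k]"
  using assms by (auto simp: Psi_eq S1_eq S2_eq)

lemma hd_in_letters: "w \<in> Psi n \<Longrightarrow> hd w \<in> letters n"
  by (cases rule: Psi_cases) auto

lemma types_word2: "\<not> type2 [a,b]" "\<not> type3 [a,b]" "\<not> type4 [a,b]" "\<not> type5 [a,b]"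
  by (simp_all add: type2_def type3_def type4_def type5_def)

lemma types_word3:
  "\<not> type1 [l,m,k]"
  "type2 [l,m,k] \<longleftrightarrow> fst l \<noteq> fst m \<and> k = m"
  "type3 [l,m,k] \<longleftrightarrow> fst l \<noteq> fst m \<and> k = l"
  "type4 [l,m,k] \<longleftrightarrow> fst l \<noteq> fst m \<and> k = inv_letter l"
  "type5 [l,m,k] \<longleftrightarrow> fst l \<noteq> fst m \<and> fst m \<noteq> fst k \<and> fst l \<noteq> fst k"
proof -
  obtain i t j s q p where "l = (i, t)" "m = (j, s)" "k = (q, p)" by (cases l, cases m, cases k)
  then show "\<not> type1 [l,m,k]"
    "type2 [l,m,k] \<longleftrightarrow> fst l \<noteq> fst m \<and> k = m"
    "type3 [l,m,k] \<longleftrightarrow> fst l \<noteq> fst m \<and> k = l"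
    "type4 [l,m,k] \<longleftrightarrow> fst l \<noteq> fst m \<and> k = inv_letter l"
    "type5 [l,m,k] \<longleftrightarrow> fst l \<noteq> fst m \<and> fst m \<noteq> fst k \<and> fst l \<noteq> fst k"
    by (auto simp: type1_def type2_def type3_def type4_def type5_def inv_letter_def)
qed

definition mass_S1 :: "nat \<Rightarrow> (word \<Rightarrow> real) \<Rightarrow> letter \<Rightarrow> real" where
  "mass_S1 n x l = (\<Sum>w\<in>S1 n (fst l) (snd l). x w)"

definition mass_S2 :: "nat \<Rightarrow> (word \<Rightarrow> real) \<Rightarrow> letter \<Rightarrow> letter \<Rightarrow> real" where
  "mass_S2 n x l m = (\<Sum>w\<in>S2 n (fst l) (snd l) (fst m) (snd m). x w)"

lemma mass_S2_split: "mass_S2 n x l m = x [l,m,m] + (\<Sum>k\<in>other_letters n m. x [l,m,k])"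
proof -
  have "[l,m,m] \<notin> (\<lambda>k. [l,m,k]) ` other_letters n m"
    by (auto simp: other_letters_def)
  moreover have "inj_on (\<lambda>k. [l,m,k]) (other_letters n m)"
    by (auto simp: inj_on_def)
  ultimately show ?thesis
    by (simp add: mass_S2_def S2_eq sum.reindex)
qed

lemma mass_S1_split: "mass_S1 n x l = x [l,l] + (\<Sum>m\<in>other_letters n l. mass_S2 n x l m)"
proof -
  have "[l,l] \<notin> (\<Union>m\<in>other_letters n l. S2 n (fst l) (snd l) (fst m) (snd m))"
    by (auto simp: S2_def)
  moreover have "(\<Sum>w\<in>(\<Union>m\<in>other_letters n l. S2 n (fst l) (snd l) (fst m) (snd m)). x w)
      = (\<Sum>m\<in>other_letters n l. mass_S2 n x l m)"
    unfolding mass_S2_def by (rule sum.UNION_disjoint) (simp_all, auto simp: S2_def)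
  ultimately show ?thesis
    by (simp add: mass_S1_def S1_eq)
qed

lemma sum_Psi_mass_S1: "(\<Sum>w\<in>Psi n. x w) = (\<Sum>l\<in>letters n. mass_S1 n x l)"
  unfolding mass_S1_def Psi_eq by (rule sum.UNION_disjoint) (simp_all, auto simp: S1_def)

lemma Delta_pos: "x \<in> Delta n \<Longrightarrow> w \<in> Psi n \<Longrightarrow> 0 < x w"
  by (simp add: Delta_def)

lemma sum_Delta_diff: "x \<in> Delta n \<Longrightarrow> S \<subseteq> Psi n \<Longrightarrow> (\<Sum>v\<in>Psi n - S. x v) = 1 - (\<Sum>v\<in>S. x v)"
  by (simp add: Delta_def sum_diff)

lemma sum_Delta_bounds:
  assumes "x \<in> Delta n" "S \<subseteq> Psi n" "w \<in> S" "w' \<in> Psi n" "w' \<notin> S"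
  shows "0 < (\<Sum>v\<in>S. x v)" and "(\<Sum>v\<in>S. x v) < 1"
proof -
  have "finite S" using finite_subset[OF assms(2) finite_Psi] .
  have pos: "\<And>v. v \<in> Psi n \<Longrightarrow> 0 < x v" using assms(1) by (rule Delta_pos)
  show "0 < (\<Sum>v\<in>S. x v)"
    using \<open>finite S\<close> assms(2,3) pos by (intro sum_pos) auto
  have "x w' + (\<Sum>v\<in>S. x v) = (\<Sum>v\<in>insert w' S. x v)"
    using \<open>finite S\<close> assms(5) by simp
  also have "\<dots> \<le> (\<Sum>v\<in>Psi n. x v)"
    using assms(2,4) less_imp_le[OF pos] by (intro sum_mono2) auto
  also have "\<dots> = 1" using assms(1) by (simp add: Delta_def)
  finally show "(\<Sum>v\<in>S. x v) < 1"
    using pos[OF assms(4)] by simp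
qed

lemma Delta_less_1:
  assumes "x \<in> Delta n" "w \<in> Psi n"
  shows "x w < 1"
proof -
  let ?l = "inv_letter (hd w)"
  have "hd w \<in> letters n" using assms(2) by (rule hd_in_letters)
  then have "[?l, ?l] \<in> Psi n" "?l \<noteq> hd w"
    by (simp_all add: word1_in_Psi inv_letter_in_letters inv_letter_neq)
  then have "[?l, ?l] \<in> Psi n" "[?l, ?l] \<noteq> w" by (metis list.sel(1))+
  then show ?thesis using sum_Delta_bounds(2)[OF assms(1), of "{w}" w "[?l, ?l]"] assms by simp
qed

lemma mass_S1_bounds:
  assumes "x \<in> Delta n" "l \<in> letters n"
  shows "0 < mass_S1 n x l" "mass_S1 n x l < 1"
proof -
  let ?l' = "inv_letter l"
  have "[l,l] \<in> S1 n (fst l) (snd l)" "[?l',?l'] \<in> Psi n" "[?l',?l'] \<notin> S1 n (fst l) (snd l)"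
    using assms(2) inv_letter_neq[OF assms(2)]
    by (auto simp: S1_eq S2_eq intro: word1_in_Psi inv_letter_in_letters)
  then show "0 < mass_S1 n x l" "mass_S1 n x l < 1"
    unfolding mass_S1_def using sum_Delta_bounds[OF assms(1) S1_subset_Psi[OF assms(2)]] by auto
qed

lemma mass_S2_bounds:
  assumes "x \<in> Delta n" "l \<in> letters n" "m \<in> other_letters n l"
  shows "0 < mass_S2 n x l m" "mass_S2 n x l m < 1"
proof -
  have "[l,m,m] \<in> S2 n (fst l) (snd l) (fst m) (snd m)" "[l,l] \<in> Psi n"
    "[l,l] \<notin> S2 n (fst l) (snd l) (fst m) (snd m)"
    using assms(2) by (auto simp: S2_eq intro: word1_in_Psi)
  then show "0 < mass_S2 n x l m" "mass_S2 n x l m < 1"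
    unfolding mass_S2_def using sum_Delta_bounds[OF assms(1) S2_subset_Psi[OF assms(2,3)]] by auto
qed

section \<open>The relations and the lower bounds they impose\<close>

lemma word1_rel: "l \<in> letters n \<Longrightarrow> ([l,l], Psi n - S1 n (fst l) (snd l)) \<in> rels n"
  unfolding rels_def
  by (rule UnI1, rule UnI1, rule UnI1, rule UnI1) (cases l, auto simp: letters_def)

lemma word2_rel:
  "l \<in> letters n \<Longrightarrow> m \<in> other_letters n l \<Longrightarrow>
    ([l,m,m], Psi n - S2 n (fst l) (snd l) (fst m) (snd m)) \<in> rels n"
  unfolding rels_def
  by (rule UnI1, rule UnI1, rule UnI1, rule UnI2)
     (cases l, cases m, auto simp: letters_def other_letters_def)

lemma word4_rel:
  "l \<in> letters n \<Longrightarrow> m \<in> other_letters n l \<Longrightarrow> ([l,m,inv_letter l], S1 n (fst l) (snd l)) \<in> rels n"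
  unfolding rels_def
  by (rule UnI1, rule UnI2)
     (cases l, cases m, auto simp: letters_def other_letters_def inv_letter_def)

lemma word35_rel:
  assumes "l \<in> letters n" "m \<in> other_letters n l" "k \<in> other_letters n m" "k \<noteq> inv_letter l"
  shows "([l,m,k], Psi n - S2 n (fst m) (snd m) (fst k) (snd k)) \<in> rels n"
proof (cases "fst k = fst l")
  case True
  then have "k = l"
    using assms letter_eq_or_inv other_letters_subset by blast
  show ?thesis
    unfolding rels_def \<open>k = l\<close>
    by (rule UnI1, rule UnI1, rule UnI2, rule CollectI,
        rule exI[of _ "fst l"], rule exI[of _ "fst m"],
        rule exI[of _ "snd l"], rule exI[of _ "snd m"])
       (use assms in \<open>auto simp: letters_def other_letters_def\<close>)
next
  case False
  show ?thesis
    unfolding rels_def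
    by (rule UnI2, rule CollectI,
        rule exI[of _ "fst l"], rule exI[of _ "fst m"], rule exI[of _ "fst k"],
        rule exI[of _ "snd l"], rule exI[of _ "snd m"], rule exI[of _ "snd k"])
       (use assms False in \<open>auto simp: letters_def other_letters_def\<close>)
qed

lemma rels_cases:
  assumes "r \<in> rels n"
  obtains (word1) l where "l \<in> letters n" "r = ([l,l], Psi n - S1 n (fst l) (snd l))"
  | (word4) l m where "l \<in> letters n" "m \<in> other_letters n l"
      "r = ([l,m,inv_letter l], S1 n (fst l) (snd l))"
  | (word2) l m where "l \<in> letters n" "m \<in> other_letters n l"
      "r = ([l,m,m], Psi n - S2 n (fst l) (snd l) (fst m) (snd m))"
  | (word35) l m k where "l \<in> letters n" "m \<in> other_letters n l" "k \<in> other_letters n m"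
      "k \<noteq> inv_letter l" "r = ([l,m,k], Psi n - S2 n (fst m) (snd m) (fst k) (snd k))"
proof -
  from assms consider
    (a) i t where "r = ([(i,t),(i,t)], Psi n - S1 n i t)" "i \<in> {1..n}" "t \<in> sgns"
  | (b) i j t s where "r = ([(i,t),(j,s),(j,s)], Psi n - S2 n i t j s)"
      "i \<in> {1..n}" "j \<in> {1..n}" "i \<noteq> j" "t \<in> sgns" "s \<in> sgns"
  | (c) i j t s where "r = ([(i,t),(j,s),(i,t)], Psi n - S2 n j s i t)"
      "i \<in> {1..n}" "j \<in> {1..n}" "i \<noteq> j" "t \<in> sgns" "s \<in> sgns"
  | (d) i j t s where "r = ([(i,t),(j,s),(i,-t)], S1 n i t)"
      "i \<in> {1..n}" "j \<in> {1..n}" "i \<noteq> j" "t \<in> sgns" "s \<in> sgns"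
  | (e) i j k t s p where "r = ([(i,t),(j,s),(k,p)], Psi n - S2 n j s k p)"
      "i \<in> {1..n}" "j \<in> {1..n}" "k \<in> {1..n}" "i \<noteq> j" "j \<noteq> k" "i \<noteq> k"
      "t \<in> sgns" "s \<in> sgns" "p \<in> sgns"
    unfolding rels_def by blast
  then show thesis
  proof cases
    case a
    then show thesis using word1[of "(i,t)"] by (simp add: letters_def)
  next
    case b
    then show thesis using word2[of "(i,t)" "(j,s)"] by (simp add: letters_def other_letters_def)
  next
    case c
    then show thesis using word35[of "(i,t)" "(j,s)" "(i,t)"]
      by (auto simp: letters_def other_letters_def inv_letter_def sgns_def)
  next
    case d
    then show thesis using word4[of "(i,t)" "(j,s)"]
      by (simp add: letters_def other_letters_def inv_letter_def)
  next
    case e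
    then show thesis using word35[of "(i,t)" "(j,s)" "(k,p)"]
      by (auto simp: letters_def other_letters_def inv_letter_def)
  qed
qed

lemma finite_rels: "finite (rels n)"
proof (rule finite_subset)
  show "rels n \<subseteq> Psi n \<times> Pow (Psi n)"
  proof
    fix r assume "r \<in> rels n"
    then show "r \<in> Psi n \<times> Pow (Psi n)"
    proof (cases rule: rels_cases)
      case (word1 l)
      then show ?thesis using word1_in_Psi[of l n] by auto
    next
      case (word4 l m)
      then show ?thesis
        using word3_in_Psi[OF _ _ inv_letter_in_other_letters] S1_subset_Psi[of l n] by auto
    next
      case (word2 l m)
      then show ?thesis using word2_in_Psi[of l n m] by auto
    next
      case (word35 l m k)
      then show ?thesis using word3_in_Psi[of l n m k] by auto
    qed
  qed
qed simp

lemma frel_le_FF: "r \<in> rels n \<Longrightarrow> frel r x \<le> FF n x"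
  unfolding FF_def by (rule Max_ge) (simp_all add: finite_rels)

text \<open>For a letter \<open>l\<close> the relations 1a and 4b have values \<open>(1-u)/u \<cdot> s/(1-s)\<close> and
  \<open>(1-v)/v \<cdot> (1-s)/s\<close>, whose product \<open>(1-u)(1-v)/(uv)\<close> exceeds 1 because \<open>u + v < 1\<close>.\<close>

lemma FF_gt_1:
  assumes "2 \<le> n" "x \<in> Delta n"
  shows "1 < FF n x"
proof (rule ccontr)
  assume "\<not> 1 < FF n x"
  define l where "l = (1::nat, 1::int)"
  define m where "m = (2::nat, 1::int)"
  have l: "l \<in> letters n" and m: "m \<in> other_letters n l"
    using assms unfolding l_def m_def letters_def other_letters_def sgns_def by auto
  define u where "u = x [l,l]"
  define v where "v = x [l,m,inv_letter l]"
  define s where "s = mass_S1 n x l"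
  have words: "[l,l] \<in> Psi n" "[l,m,inv_letter l] \<in> Psi n" "[l,m,m] \<in> Psi n"
    using l m inv_letter_in_other_letters[OF l m]
    by (simp_all add: word1_in_Psi word2_in_Psi word3_in_Psi)
  have "m \<noteq> inv_letter l" using m by (auto simp: other_letters_def inv_letter_def)
  then have "u + v < 1"
    using sum_Delta_bounds(2)[OF assms(2), of "{[l,l], [l,m,inv_letter l]}" "[l,l]" "[l,m,m]"] words
    by (simp add: u_def v_def)
  have "0 < u" "0 < v" using words Delta_pos[OF assms(2)] by (simp_all add: u_def v_def)
  have "0 < s" "s < 1" using mass_S1_bounds[OF assms(2) l] by (simp_all add: s_def)
  have "frel ([l,l], Psi n - S1 n (fst l) (snd l)) x = (1 - u) / u * (s / (1 - s))"
    using sum_Delta_diff[OF assms(2) S1_subset_Psi[OF l]]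
    by (simp add: frel_def Let_def u_def s_def mass_S1_def)
  moreover have "frel ([l,m,inv_letter l], S1 n (fst l) (snd l)) x = (1 - v) / v * ((1 - s) / s)"
    by (simp add: frel_def Let_def v_def s_def mass_S1_def)
  ultimately have "(1 - u) / u * (s / (1 - s)) \<le> 1" "(1 - v) / v * ((1 - s) / s) \<le> 1"
    using frel_le_FF[OF word1_rel[OF l], of x] frel_le_FF[OF word4_rel[OF l m], of x]
      \<open>\<not> 1 < FF n x\<close> by linarith+
  moreover have "0 \<le> (1 - v) / v * ((1 - s) / s)"
    using \<open>0 < v\<close> \<open>u + v < 1\<close> \<open>0 < u\<close> \<open>0 < s\<close> \<open>s < 1\<close> by simp
  ultimately have "(1 - u) / u * (s / (1 - s)) * ((1 - v) / v * ((1 - s) / s)) \<le> 1"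
    using mult_le_one by blast
  moreover have "(1 - u) / u * (s / (1 - s)) * ((1 - v) / v * ((1 - s) / s))
      = (1 - u) * (1 - v) / (u * v)"
    using \<open>0 < u\<close> \<open>0 < v\<close> \<open>0 < s\<close> \<open>s < 1\<close> by (simp add: field_simps)
  ultimately have "(1 - u) * (1 - v) / (u * v) \<le> 1" by linarith
  then have "(1 - u) * (1 - v) \<le> u * v"
    using \<open>0 < u\<close> \<open>0 < v\<close> by (simp add: pos_divide_le_eq)
  then show False using \<open>u + v < 1\<close> by (simp add: algebra_simps)
qed

lemma rels_weight_bounds:
  assumes "x \<in> Delta n" "(w, W) \<in> rels n"
  shows "w \<in> Psi n" "0 < (\<Sum>v\<in>W. x v)" "(\<Sum>v\<in>W. x v) < 1"
proof -
  from assms(2) have "w \<in> Psi n \<and> 0 < (\<Sum>v\<in>W. x v) \<and> (\<Sum>v\<in>W. x v) < 1"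
  proof (cases rule: rels_cases)
    case (word1 l)
    then show ?thesis
      using mass_S1_bounds[OF assms(1) word1(1)]
        sum_Delta_diff[OF assms(1) S1_subset_Psi[OF word1(1)]]
      by (simp add: word1_in_Psi mass_S1_def)
  next
    case (word4 l m)
    then show ?thesis
      using mass_S1_bounds[OF assms(1) word4(1)]
      by (simp add: word3_in_Psi inv_letter_in_other_letters mass_S1_def)
  next
    case (word2 l m)
    then show ?thesis
      using mass_S2_bounds[OF assms(1) word2(1,2)]
        sum_Delta_diff[OF assms(1) S2_subset_Psi[OF word2(1,2)]]
      by (simp add: word2_in_Psi mass_S2_def)
  next
    case (word35 l m k)
    have "m \<in> letters n" using word35(2) other_letters_subset by blast
    then show ?thesis
      using mass_S2_bounds[OF assms(1), of m k] sum_Delta_diff[OF assms(1) S2_subset_Psi[of m n k]]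
        word35
      by (simp add: word3_in_Psi mass_S2_def)
  qed
  then show "w \<in> Psi n" "0 < (\<Sum>v\<in>W. x v)" "(\<Sum>v\<in>W. x v) < 1" by auto
qed

lemma frel_rels_threshold_iff:
  assumes "x \<in> Delta n" "(w, W) \<in> rels n" "0 < M"
  shows "frel (w, W) x \<le> M \<longleftrightarrow> threshold M (1 - (\<Sum>v\<in>W. x v)) \<le> x w"
    and "frel (w, W) x < M \<longleftrightarrow> threshold M (1 - (\<Sum>v\<in>W. x v)) < x w"
  using frel_threshold_iff[OF assms(3) Delta_pos[OF assms(1)] Delta_less_1[OF assms(1)]]
    rels_weight_bounds[OF assms(1,2)] by simp_all

lemma threshold_FF_le:
  assumes "2 \<le> n" "x \<in> Delta n" "(w, W) \<in> rels n"
  shows "threshold (FF n x) (1 - (\<Sum>v\<in>W. x v)) \<le> x w"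
proof -
  have "0 < FF n x" using FF_gt_1[OF assms(1,2)] by simp
  then show ?thesis
    using frel_rels_threshold_iff(1)[OF assms(2,3)] frel_le_FF[OF assms(3), of x] by simp
qed

lemma word1_lower:
  assumes "2 \<le> n" "x \<in> Delta n" "l \<in> letters n"
  shows "threshold (FF n x) (mass_S1 n x l) \<le> x [l,l]"
  using threshold_FF_le[OF assms(1,2) word1_rel[OF assms(3)]]
    sum_Delta_diff[OF assms(2) S1_subset_Psi[OF assms(3)]]
  by (simp add: mass_S1_def)

lemma word4_lower:
  assumes "2 \<le> n" "x \<in> Delta n" "l \<in> letters n" "m \<in> other_letters n l"
  shows "threshold (FF n x) (1 - mass_S1 n x l) \<le> x [l,m,inv_letter l]"
  using threshold_FF_le[OF assms(1,2) word4_rel[OF assms(3,4)]]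
  by (simp add: mass_S1_def)

lemma word2_lower:
  assumes "2 \<le> n" "x \<in> Delta n" "l \<in> letters n" "m \<in> other_letters n l"
  shows "threshold (FF n x) (mass_S2 n x l m) \<le> x [l,m,m]"
  using threshold_FF_le[OF assms(1,2) word2_rel[OF assms(3,4)]]
    sum_Delta_diff[OF assms(2) S2_subset_Psi[OF assms(3,4)]]
  by (simp add: mass_S2_def)

lemma word35_lower:
  assumes "2 \<le> n" "x \<in> Delta n" "l \<in> letters n" "m \<in> other_letters n l"
    and "k \<in> other_letters n m" "k \<noteq> inv_letter l"
  shows "threshold (FF n x) (mass_S2 n x m k) \<le> x [l,m,k]"
proof -
  have "m \<in> letters n" using assms(4) other_letters_subset by blast
  then show ?thesis
    using threshold_FF_le[OF assms(1,2) word35_rel[OF assms(3-6)]]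
      sum_Delta_diff[OF assms(2) S2_subset_Psi[of m n k]] assms(5)
    by (simp add: mass_S2_def)
qed

section \<open>Masses of the type classes\<close>

text \<open>In letter notation the words of type 1 are \<open>[l,l]\<close>, those of type 4 are \<open>[l,m,l\<inverse>]\<close>, and
  those of types 2, 3 and 5 are \<open>[l,m,m]\<close> and \<open>[l,m,k]\<close> with \<open>k \<noteq> l\<inverse>\<close> (see \<open>types_word3\<close>).\<close>

definition mass_type1 :: "nat \<Rightarrow> (word \<Rightarrow> real) \<Rightarrow> real" where
  "mass_type1 n x = (\<Sum>l\<in>letters n. x [l,l])"

definition mass_type4 :: "nat \<Rightarrow> (word \<Rightarrow> real) \<Rightarrow> real" where
  "mass_type4 n x = (\<Sum>l\<in>letters n. \<Sum>m\<in>other_letters n l. x [l,m,inv_letter l])"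

definition mass_type235 :: "nat \<Rightarrow> (word \<Rightarrow> real) \<Rightarrow> real" where
  "mass_type235 n x = (\<Sum>l\<in>letters n. \<Sum>m\<in>other_letters n l.
     x [l,m,m] + (\<Sum>k\<in>other_letters n m - {inv_letter l}. x [l,m,k]))"

lemma mass_S2_split_inv:
  assumes "l \<in> letters n" "m \<in> other_letters n l"
  shows "mass_S2 n x l m
    = x [l,m,inv_letter l] + (x [l,m,m] + (\<Sum>k\<in>other_letters n m - {inv_letter l}. x [l,m,k]))"
  using sum.remove[OF finite_other_letters inv_letter_in_other_letters[OF assms],
      of "\<lambda>k. x [l,m,k]"]
  by (simp add: mass_S2_split)

lemma sum_mass_S2:
  "(\<Sum>l\<in>letters n. \<Sum>m\<in>other_letters n l. mass_S2 n x l m) = mass_type4 n x + mass_type235 n x"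
  by (simp add: mass_S2_split_inv mass_type4_def mass_type235_def sum.distrib cong: sum.cong)

lemma mass_types_sum:
  assumes "x \<in> Delta n"
  shows "mass_type1 n x + mass_type4 n x + mass_type235 n x = 1"
proof -
  have "1 = (\<Sum>l\<in>letters n. mass_S1 n x l)"
    using assms by (simp add: Delta_def sum_Psi_mass_S1)
  also have "\<dots> = mass_type1 n x + (\<Sum>l\<in>letters n. \<Sum>m\<in>other_letters n l. mass_S2 n x l m)"
    by (simp add: mass_S1_split mass_type1_def sum.distrib)
  finally show ?thesis by (simp add: sum_mass_S2)
qed

lemma mass_type4_type235_bounds:
  assumes "2 \<le> n" "x \<in> Delta n"
  shows "0 < mass_type4 n x + mass_type235 n x" "mass_type4 n x + mass_type235 n x \<le> 1"
proof -
  have "0 \<le> mass_type1 n x"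
    unfolding mass_type1_def by (intro sum_nonneg less_imp_le Delta_pos[OF assms(2)] word1_in_Psi)
  then show "mass_type4 n x + mass_type235 n x \<le> 1" using mass_types_sum[OF assms(2)] by simp
  have "(1, 1) \<in> letters n" using assms(1) by (simp add: letters_def sgns_def)
  moreover have "other_letters n l \<noteq> {}" if "l \<in> letters n" for l
    using card_other_letters[OF that] assms(1) by auto
  ultimately show "0 < mass_type4 n x + mass_type235 n x"
    unfolding sum_mass_S2[symmetric] using mass_S2_bounds[OF assms(2)]
    by (intro sum_pos) auto
qed

lemma sum_mass_S1_mean:
  assumes "x \<in> Delta n"
  shows "(\<Sum>l\<in>letters n. mass_S1 n x l) = card (letters n) * (1 / (2 * real n))"
    and "(\<Sum>l\<in>letters n. 1 - mass_S1 n x l) = card (letters n) * (1 - 1 / (2 * real n))"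
proof -
  have "(\<Sum>l\<in>letters n. mass_S1 n x l) = 1"
    using assms by (simp add: Delta_def flip: sum_Psi_mass_S1)
  moreover have "n \<noteq> 0 \<or> letters n = {}" by (auto simp: letters_def)
  ultimately show "(\<Sum>l\<in>letters n. mass_S1 n x l) = card (letters n) * (1 / (2 * real n))"
    and "(\<Sum>l\<in>letters n. 1 - mass_S1 n x l) = card (letters n) * (1 - 1 / (2 * real n))"
    by (auto simp: card_letters sum_subtractf algebra_simps)
qed

lemma mass_type1_lower:
  assumes "2 \<le> n" "x \<in> Delta n"
  shows "2 * real n * threshold (FF n x) (1 / (2 * real n)) \<le> mass_type1 n x"
proof -
  have "\<And>l. l \<in> letters n \<Longrightarrow> 0 \<le> mass_S1 n x l \<and> mass_S1 n x l \<le> 1"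
    using mass_S1_bounds[OF assms(2)] by (simp add: less_imp_le)
  moreover have "0 \<le> 1 / (2 * real n)" "1 / (2 * real n) \<le> 1" using assms(1) by simp_all
  ultimately have "card (letters n) * threshold (FF n x) (1 / (2 * real n))
      \<le> (\<Sum>l\<in>letters n. threshold (FF n x) (mass_S1 n x l))"
    by (rule threshold_jensen(1)[OF finite_letters FF_gt_1[OF assms] _ _ _
          sum_mass_S1_mean(1)[OF assms(2)]])
  also have "\<dots> \<le> mass_type1 n x"
    unfolding mass_type1_def using word1_lower[OF assms] by (rule sum_mono)
  finally show ?thesis by (simp add: card_letters)
qed

lemma mass_type4_lower:
  assumes "2 \<le> n" "x \<in> Delta n"
  defines "\<gamma> \<equiv> threshold (FF n x) (1 - 1 / (2 * real n))"
  shows "2 * real n * (2 * real n - 2) * \<gamma> \<le> mass_type4 n x"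
    and "mass_type4 n x \<le> 2 * real n * (2 * real n - 2) * \<gamma> \<Longrightarrow>
      (\<forall>l\<in>letters n. mass_S1 n x l = 1 / (2 * real n)) \<and>
      (\<forall>l\<in>letters n. \<forall>m\<in>other_letters n l. x [l,m,inv_letter l] = \<gamma>)"
proof -
  let ?c = "2 * real n" and ?d = "2 * real n - 2"
  define h where "h l = threshold (FF n x) (1 - mass_S1 n x l)" for l
  have bounds: "\<And>l. l \<in> letters n \<Longrightarrow> 0 \<le> 1 - mass_S1 n x l \<and> 1 - mass_S1 n x l \<le> 1"
    using mass_S1_bounds[OF assms(2)] by (simp add: less_imp_le)
  have "0 \<le> 1 - 1 / ?c" "1 - 1 / ?c \<le> 1" using assms(1) by simp_all
  note jensen = threshold_jensen[OF finite_letters FF_gt_1[OF assms(1,2)] bounds this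
      sum_mass_S1_mean(2)[OF assms(2)]]
  have jensen1: "?c * \<gamma> \<le> (\<Sum>l\<in>letters n. h l)"
    using jensen(1) by (simp add: card_letters h_def \<gamma>_def)
  have jensen2: "mass_S1 n x l = 1 / ?c" if "(\<Sum>l\<in>letters n. h l) \<le> ?c * \<gamma>" "l \<in> letters n" for l
    using jensen(2)[of l] that by (simp add: card_letters h_def \<gamma>_def)
  have lower: "\<And>l m. l \<in> letters n \<Longrightarrow> m \<in> other_letters n l \<Longrightarrow> h l \<le> x [l,m,inv_letter l]"
    unfolding h_def using word4_lower[OF assms(1,2)] .
  have double: "(\<Sum>l\<in>letters n. \<Sum>m\<in>other_letters n l. h l) = ?d * (\<Sum>l\<in>letters n. h l)"
    by (simp add: card_other_letters sum_distrib_left cong: sum.cong)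
  have "(\<Sum>l\<in>letters n. \<Sum>m\<in>other_letters n l. h l) \<le> mass_type4 n x"
    unfolding mass_type4_def using lower by (intro sum_mono) auto
  moreover have "?c * ?d * \<gamma> \<le> ?d * (\<Sum>l\<in>letters n. h l)"
    using mult_left_mono[OF jensen1, of ?d] assms(1) by (simp add: mult_ac)
  ultimately show "?c * ?d * \<gamma> \<le> mass_type4 n x" using double by linarith
  assume le: "mass_type4 n x \<le> ?c * ?d * \<gamma>"
  have tight: "mass_type4 n x \<le> (\<Sum>l\<in>letters n. \<Sum>m\<in>other_letters n l. h l)"
    using le \<open>?c * ?d * \<gamma> \<le> ?d * (\<Sum>l\<in>letters n. h l)\<close> double by linarith
  have "h l = x [l,m,inv_letter l]" if "l \<in> letters n" "m \<in> other_letters n l" for l m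
    by (rule sum_sum_mono_eq[where f="\<lambda>l m. h l" and g="\<lambda>l m. x [l,m,inv_letter l]"
          and B="other_letters n", OF finite_letters _ lower tight[unfolded mass_type4_def] that])
       simp
  moreover have "?d * (\<Sum>l\<in>letters n. h l) \<le> ?d * (?c * \<gamma>)"
    using le \<open>(\<Sum>l\<in>letters n. \<Sum>m\<in>other_letters n l. h l) \<le> mass_type4 n x\<close> double
    by (simp add: mult_ac)
  then have "(\<Sum>l\<in>letters n. h l) \<le> ?c * \<gamma>"
    using assms(1) by (simp add: mult_le_cancel_left_pos)
  then have "\<forall>l\<in>letters n. mass_S1 n x l = 1 / ?c" using jensen2 by blast
  ultimately show "(\<forall>l\<in>letters n. mass_S1 n x l = 1 / ?c) \<and>
      (\<forall>l\<in>letters n. \<forall>m\<in>other_letters n l. x [l,m,inv_letter l] = \<gamma>)"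
    by (simp add: h_def \<gamma>_def)
qed

lemma threshold_mass_S2_jensen:
  assumes "2 \<le> n" "x \<in> Delta n"
  defines "t \<equiv> (mass_type4 n x + mass_type235 n x) / (2 * real n * (2 * real n - 2))"
  shows "2 * real n * (2 * real n - 2) * threshold (FF n x) t
      \<le> (\<Sum>l\<in>letters n. \<Sum>m\<in>other_letters n l. threshold (FF n x) (mass_S2 n x l m))"
    and "(\<Sum>l\<in>letters n. \<Sum>m\<in>other_letters n l. threshold (FF n x) (mass_S2 n x l m))
      \<le> 2 * real n * (2 * real n - 2) * threshold (FF n x) t \<Longrightarrow>
      l \<in> letters n \<Longrightarrow> m \<in> other_letters n l \<Longrightarrow> mass_S2 n x l m = t"
proof -
  let ?P = "Sigma (letters n) (other_letters n)" and ?N = "2 * real n * (2 * real n - 2)"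
  have "?N \<ge> 8" using assms(1) mult_mono[of 4 "2 * real n" 2 "2 * real n - 2"] by simp
  have card: "real (card ?P) = ?N"
    by (simp add: card_other_letters cong: sum.cong) (simp add: card_letters)
  have sum_P: "(\<Sum>l\<in>letters n. \<Sum>m\<in>other_letters n l. f l m) = (\<Sum>p\<in>?P. f (fst p) (snd p))"
    for f :: "letter \<Rightarrow> letter \<Rightarrow> real"
    by (simp add: sum.Sigma split_def)
  have bounds: "0 \<le> mass_S2 n x (fst p) (snd p) \<and> mass_S2 n x (fst p) (snd p) \<le> 1" if "p \<in> ?P" for p
    using that mass_S2_bounds[OF assms(2)] by (auto simp: less_imp_le)
  have "(\<Sum>p\<in>?P. mass_S2 n x (fst p) (snd p)) = mass_type4 n x + mass_type235 n x"
    using sum_mass_S2[of n x] sum_P[of "mass_S2 n x"] by simp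
  also have "\<dots> = ?N * t" using assms(1) by (simp add: t_def)
  finally have mean: "(\<Sum>p\<in>?P. mass_S2 n x (fst p) (snd p)) = card ?P * t"
    using card by simp
  have "0 \<le> t" "t \<le> 1"
    using mass_type4_type235_bounds[OF assms(1,2)] \<open>?N \<ge> 8\<close> unfolding t_def
    by (simp_all add: divide_le_eq)
  note jensen = threshold_jensen[OF _ FF_gt_1[OF assms(1,2)] bounds this mean]
  show "?N * threshold (FF n x) t
      \<le> (\<Sum>l\<in>letters n. \<Sum>m\<in>other_letters n l. threshold (FF n x) (mass_S2 n x l m))"
    using jensen(1)[unfolded card] by (simp add: sum_P)
  show "mass_S2 n x l m = t"
    if "(\<Sum>l\<in>letters n. \<Sum>m\<in>other_letters n l. threshold (FF n x) (mass_S2 n x l m))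
      \<le> ?N * threshold (FF n x) t" "l \<in> letters n" "m \<in> other_letters n l"
    using jensen(2)[unfolded card, of "(l, m)"] that by (simp add: sum_P)
qed

text \<open>The word \<open>[l,m,k]\<close> is bounded through the prefix mass of \<open>(m,k)\<close>; each pair \<open>(m,k)\<close> is
  used once by \<open>[m,k,k]\<close> and \<open>2n - 3\<close> times by words \<open>[l,m,k]\<close>, whence the factor \<open>2n - 2\<close>.\<close>

lemma mass_type235_threshold_lower:
  assumes "2 \<le> n" "x \<in> Delta n"
  defines "H \<equiv> \<Sum>l\<in>letters n. \<Sum>m\<in>other_letters n l. threshold (FF n x) (mass_S2 n x l m)"
  shows "(2 * real n - 2) * H \<le> mass_type235 n x"
    and "mass_type235 n x \<le> (2 * real n - 2) * H \<Longrightarrow> l \<in> letters n \<Longrightarrow> m \<in> other_letters n l \<Longrightarrow>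
      x [l,m,m] = threshold (FF n x) (mass_S2 n x l m) \<and>
      (\<forall>k\<in>other_letters n m - {inv_letter l}. x [l,m,k] = threshold (FF n x) (mass_S2 n x m k))"
proof -
  let ?h = "\<lambda>l m. threshold (FF n x) (mass_S2 n x l m)"
  define lower where "lower l m = ?h l m + (\<Sum>k\<in>other_letters n m - {inv_letter l}. ?h m k)" for l m
  define actual where "actual l m = x [l,m,m] + (\<Sum>k\<in>other_letters n m - {inv_letter l}. x [l,m,k])"
    for l m
  have le2: "?h l m \<le> x [l,m,m]" if "l \<in> letters n" "m \<in> other_letters n l" for l m
    using word2_lower[OF assms(1,2) that] .
  have le3: "?h m k \<le> x [l,m,k]"
    if "l \<in> letters n" "m \<in> other_letters n l" "k \<in> other_letters n m - {inv_letter l}" for l m k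
    using word35_lower[OF assms(1,2) that(1,2)] that(3) by blast
  have le: "lower l m \<le> actual l m" if "l \<in> letters n" "m \<in> other_letters n l" for l m
    unfolding lower_def actual_def using le2[OF that] le3[OF that] by (intro add_mono sum_mono) auto
  have "(\<Sum>l\<in>letters n. \<Sum>m\<in>other_letters n l. lower l m) = H + (2 * real n - 3) * H"
    by (simp add: lower_def sum.distrib sum_other_letters_skip_inv H_def)
  then have sum_lower: "(\<Sum>l\<in>letters n. \<Sum>m\<in>other_letters n l. lower l m) = (2 * real n - 2) * H"
    by (simp add: algebra_simps)
  have sum_actual: "(\<Sum>l\<in>letters n. \<Sum>m\<in>other_letters n l. actual l m) = mass_type235 n x"
    by (simp add: actual_def mass_type235_def)
  show "(2 * real n - 2) * H \<le> mass_type235 n x"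
    unfolding sum_lower[symmetric] sum_actual[symmetric] using le by (intro sum_mono) auto
  assume "mass_type235 n x \<le> (2 * real n - 2) * H"
    and l: "l \<in> letters n" and m: "m \<in> other_letters n l"
  then have "lower l m = actual l m"
    using sum_sum_mono_eq[where f=lower and g=actual and B="other_letters n",
        OF finite_letters _ le _ l m]
      sum_lower sum_actual by simp
  moreover have "(\<Sum>k\<in>other_letters n m - {inv_letter l}. ?h m k)
      \<le> (\<Sum>k\<in>other_letters n m - {inv_letter l}. x [l,m,k])"
    using le3[OF l m] by (rule sum_mono)
  ultimately have "?h l m = x [l,m,m]"
    and sums: "(\<Sum>k\<in>other_letters n m - {inv_letter l}. x [l,m,k])
      \<le> (\<Sum>k\<in>other_letters n m - {inv_letter l}. ?h m k)"
    using le2[OF l m] unfolding lower_def actual_def by linarith+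
  moreover have "?h m k = x [l,m,k]" if "k \<in> other_letters n m - {inv_letter l}" for k
    using sum_mono_eq[OF _ le3[OF l m] sums that] by simp
  ultimately show "x [l,m,m] = ?h l m \<and> (\<forall>k\<in>other_letters n m - {inv_letter l}. x [l,m,k] = ?h m k)"
    by simp
qed

lemma mass_type235_lower:
  assumes "2 \<le> n" "x \<in> Delta n"
  defines "t \<equiv> (mass_type4 n x + mass_type235 n x) / (2 * real n * (2 * real n - 2))"
  shows "(2 * real n - 2) * (2 * real n * (2 * real n - 2)) * threshold (FF n x) t
      \<le> mass_type235 n x"
    and "mass_type235 n x
      \<le> (2 * real n - 2) * (2 * real n * (2 * real n - 2)) * threshold (FF n x) t \<Longrightarrow>
      \<forall>l\<in>letters n. \<forall>m\<in>other_letters n l. mass_S2 n x l m = t \<and>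
      x [l,m,m] = threshold (FF n x) t \<and>
      (\<forall>k\<in>other_letters n m - {inv_letter l}. x [l,m,k] = threshold (FF n x) t)"
proof -
  let ?d = "2 * real n - 2" and ?N = "2 * real n * (2 * real n - 2)"
  let ?H = "\<Sum>l\<in>letters n. \<Sum>m\<in>other_letters n l. threshold (FF n x) (mass_S2 n x l m)"
  note jensen = threshold_mass_S2_jensen[OF assms(1,2), folded t_def]
  note lower = mass_type235_threshold_lower[OF assms(1,2)]
  have "0 < ?d" using assms(1) by simp
  then have "?d * (?N * threshold (FF n x) t) \<le> ?d * ?H"
    using jensen(1) by simp
  then show "?d * ?N * threshold (FF n x) t \<le> mass_type235 n x"
    using lower(1) by (simp add: mult.assoc)
  assume "mass_type235 n x \<le> ?d * ?N * threshold (FF n x) t"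
  then have "?d * ?H \<le> ?d * (?N * threshold (FF n x) t)" "mass_type235 n x \<le> ?d * ?H"
    using lower(1) \<open>?d * (?N * threshold (FF n x) t) \<le> ?d * ?H\<close> by (simp_all add: mult.assoc)
  then have "?H \<le> ?N * threshold (FF n x) t" and tight: "mass_type235 n x \<le> ?d * ?H"
    using \<open>0 < ?d\<close> by simp_all
  then have S2: "\<And>l m. l \<in> letters n \<Longrightarrow> m \<in> other_letters n l \<Longrightarrow> mass_S2 n x l m = t"
    using jensen(2) by blast
  show "\<forall>l\<in>letters n. \<forall>m\<in>other_letters n l. mass_S2 n x l m = t \<and>
      x [l,m,m] = threshold (FF n x) t \<and>
      (\<forall>k\<in>other_letters n m - {inv_letter l}. x [l,m,k] = threshold (FF n x) t)"
  proof (intro ballI conjI)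
    fix l m assume l: "l \<in> letters n" and m: "m \<in> other_letters n l"
    have "m \<in> letters n" using m other_letters_subset by blast
    note word_values = lower(2)[OF tight l m]
    show "mass_S2 n x l m = t" using S2[OF l m] .
    show "x [l,m,m] = threshold (FF n x) t" using word_values S2[OF l m] by simp
    show "x [l,m,k] = threshold (FF n x) t" if "k \<in> other_letters n m - {inv_letter l}" for k
      using word_values S2[OF \<open>m \<in> letters n\<close>] that by simp
  qed
qed

section \<open>Points constant on the type classes\<close>

definition sym_point :: "real \<Rightarrow> real \<Rightarrow> real \<Rightarrow> word \<Rightarrow> real" where
  "sym_point a b c \<psi> = (if type1 \<psi> then a else if type4 \<psi> then c else b)"

lemma sym_point_word1 [simp]: "sym_point a b c [l,l] = a"
  by (simp add: sym_point_def type1_def)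

lemma sym_point_word3:
  "sym_point a b c [l,m,k] = (if fst l \<noteq> fst m \<and> k = inv_letter l then c else b)"
  by (cases l, cases m, cases k) (auto simp: sym_point_def type1_def type4_def inv_letter_def)

lemma mass_S2_sym_point:
  assumes "l \<in> letters n" "m \<in> other_letters n l"
  shows "mass_S2 n (sym_point a b c) l m = c + (2 * real n - 2) * b"
proof -
  have "fst l \<noteq> fst m" "m \<noteq> inv_letter l"
    using assms by (auto simp: other_letters_def inv_letter_def)
  have "(\<Sum>k\<in>other_letters n m - {inv_letter l}. sym_point a b c [l,m,k]) = (2 * real n - 3) * b"
    using card_other_letters_remove[OF assms] by (simp add: sym_point_word3)
  then show ?thesis
    using mass_S2_split_inv[OF assms] \<open>fst l \<noteq> fst m\<close> \<open>m \<noteq> inv_letter l\<close>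
    by (simp add: sym_point_word3 algebra_simps)
qed

lemma mass_S1_sym_point:
  assumes "l \<in> letters n"
  shows "mass_S1 n (sym_point a b c) l = a + (2 * real n - 2) * (c + (2 * real n - 2) * b)"
  using assms by (simp add: mass_S1_split mass_S2_sym_point card_other_letters cong: sum.cong)

lemma sym_point_in_Delta:
  assumes "0 < a" "0 < b" "0 < c"
    and "2 * real n * (a + (2 * real n - 2) * (c + (2 * real n - 2) * b)) = 1"
  shows "sym_point a b c \<in> Delta n"
proof -
  have "(\<Sum>w\<in>Psi n. sym_point a b c w) = 1"
    using assms(4) by (simp add: sum_Psi_mass_S1 mass_S1_sym_point card_letters cong: sum.cong)
  moreover have "0 < sym_point a b c w" for w
    using assms(1-3) by (simp add: sym_point_def)
  ultimately show ?thesis by (simp add: Delta_def)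
qed

lemma FF_sym_point_less:
  assumes "2 \<le> n" "0 < M" "0 < a" "0 < b" "0 < c"
    and total: "2 * real n * (a + (2 * real n - 2) * (c + (2 * real n - 2) * b)) = 1"
    and "threshold M (1 / (2 * real n)) < a" "threshold M (1 - 1 / (2 * real n)) < c"
    and "threshold M (c + (2 * real n - 2) * b) < b"
  shows "FF n (sym_point a b c) < M"
proof -
  let ?y = "sym_point a b c"
  have y: "?y \<in> Delta n" using sym_point_in_Delta[OF assms(3-5) total] .
  have S1: "mass_S1 n ?y l = 1 / (2 * real n)" if "l \<in> letters n" for l
    using total assms(1) by (simp add: mass_S1_sym_point[OF that] field_simps)
  have "frel r ?y < M" if "r \<in> rels n" for r
    using that
  proof (cases rule: rels_cases)
    case (word1 l)
    then show ?thesis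
      using frel_rels_threshold_iff(2)[OF y word1_rel[OF word1(1)] assms(2)]
        sum_Delta_diff[OF y S1_subset_Psi[OF word1(1)]]
        S1[OF word1(1)] assms(7) by (simp add: mass_S1_def)
  next
    case (word4 l m)
    have "fst l \<noteq> fst m" using word4(2) by (simp add: other_letters_def)
    then show ?thesis
      using word4 frel_rels_threshold_iff(2)[OF y word4_rel[OF word4(1,2)] assms(2)]
        S1[OF word4(1)] assms(8)
      by (simp add: mass_S1_def sym_point_word3)
  next
    case (word2 l m)
    have "fst l \<noteq> fst m" "m \<noteq> inv_letter l"
      using word2(2) by (auto simp: other_letters_def inv_letter_def)
    then show ?thesis
      using word2 frel_rels_threshold_iff(2)[OF y word2_rel[OF word2(1,2)] assms(2)]
        mass_S2_sym_point[OF word2(1,2)]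
        sum_Delta_diff[OF y S2_subset_Psi[OF word2(1,2)]] assms(9)
      by (simp add: mass_S2_def sym_point_word3)
  next
    case (word35 l m k)
    have "m \<in> letters n" using word35(2) other_letters_subset by blast
    then show ?thesis
      using word35 frel_rels_threshold_iff(2)[OF y word35_rel[OF word35(1-4)] assms(2)]
        mass_S2_sym_point[of m n k]
        sum_Delta_diff[OF y S2_subset_Psi[of m n k]] assms(9)
      by (simp add: mass_S2_def sym_point_word3)
  qed
  moreover have "rels n \<noteq> {}"
    using word1_rel[of "(1, 1)" n] assms(1) by (auto simp: letters_def sgns_def)
  ultimately show ?thesis
    unfolding FF_def by (simp add: finite_rels)
qed

text \<open>The slack \<open>g\<close> is shared between the type-4 value \<open>c\<close> and the value \<open>b\<close> of types 2, 3, 5,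
  which lowers their prefix mass to \<open>t - g/2\<close>; the mass freed goes to the type-1 value \<open>a\<close>.\<close>

lemma exists_FF_less:
  assumes "2 \<le> n" "0 < M" "0 < t"
    and type1_room:
      "2 * real n * threshold M (1 / (2 * real n)) \<le> 1 - 2 * real n * (2 * real n - 2) * t"
    and slack: "threshold M (1 - 1 / (2 * real n)) + (2 * real n - 2) * threshold M t < t"
  shows "\<exists>y\<in>Delta n. FF n y < M"
proof -
  let ?c = "2 * real n" and ?d = "2 * real n - 2"
  define g where "g = t - threshold M (1 - 1 / ?c) - ?d * threshold M t"
  define a where "a = (1 - ?c * ?d * (t - g / 2)) / ?c"
  define b where "b = threshold M t + g / (4 * ?d)"
  define c where "c = threshold M (1 - 1 / ?c) + g / 4"
  have "0 < g" using slack by (simp add: g_def)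
  have "2 \<le> ?d" "4 \<le> ?c" using assms(1) by simp_all
  have "0 < threshold M (1 / ?c)" "0 < threshold M (1 - 1 / ?c)"
    using assms(1,2) by (simp_all add: threshold_pos)
  then have "?c * ?d * t < 1" using type1_room \<open>4 \<le> ?c\<close> by (smt (verit) mult_pos_pos)
  then have "t < 1"
    using \<open>2 \<le> ?d\<close> \<open>4 \<le> ?c\<close> assms(3) by (smt (verit) mult_less_cancel_right1 mult_mono)
  then have "0 < threshold M t" using assms(2,3) by (simp add: threshold_pos)
  have sum: "c + ?d * b = t - g / 2"
    using \<open>2 \<le> ?d\<close> by (simp add: b_def c_def g_def field_simps)
  have total: "?c * (a + ?d * (c + ?d * b)) = 1"
    unfolding sum using \<open>4 \<le> ?c\<close> by (simp add: a_def field_simps)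
  have "?c * a = 1 - ?c * ?d * t + ?c * ?d * g / 2"
    using \<open>4 \<le> ?c\<close> by (simp add: a_def field_simps)
  moreover have "0 < ?c * ?d * g" using \<open>0 < g\<close> \<open>2 \<le> ?d\<close> \<open>4 \<le> ?c\<close> by simp
  ultimately have "?c * threshold M (1 / ?c) < ?c * a" using type1_room by linarith
  then have a: "threshold M (1 / ?c) < a" using \<open>4 \<le> ?c\<close> by simp
  have c: "threshold M (1 - 1 / ?c) < c" using \<open>0 < g\<close> by (simp add: c_def)
  have "0 < g / (4 * ?d)" using \<open>0 < g\<close> \<open>2 \<le> ?d\<close> by simp
  then have "0 < b" "0 < c"
    using \<open>0 < threshold M t\<close> \<open>0 < threshold M (1 - 1 / ?c)\<close> \<open>0 < g\<close>
    unfolding b_def c_def by linarith+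
  then have "0 \<le> t - g / 2" unfolding sum[symmetric] using \<open>2 \<le> ?d\<close> by simp
  then have "threshold M (c + ?d * b) \<le> threshold M t"
    unfolding sum using assms(2) \<open>0 < g\<close> \<open>t < 1\<close> by (intro threshold_mono) auto
  then have b: "threshold M (c + ?d * b) < b"
    using \<open>0 < g / (4 * ?d)\<close> unfolding b_def by linarith
  have "0 < a" using a \<open>0 < threshold M (1 / ?c)\<close> by simp
  then show ?thesis
    using \<open>0 < b\<close> \<open>0 < c\<close> sym_point_in_Delta[OF _ _ _ total]
      FF_sym_point_less[OF assms(1,2) _ _ _ total a c b]
    by blast
qed

section \<open>Minimizers\<close>

lemma minimizer_mass_bounds:
  assumes "2 \<le> n" "x \<in> Delta n" and minimal: "\<And>y. y \<in> Delta n \<Longrightarrow> FF n x \<le> FF n y"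
  defines "t \<equiv> (mass_type4 n x + mass_type235 n x) / (2 * real n * (2 * real n - 2))"
  shows "mass_type4 n x \<le> 2 * real n * (2 * real n - 2) * threshold (FF n x) (1 - 1 / (2 * real n))"
    and "mass_type235 n x
      \<le> (2 * real n - 2) * (2 * real n * (2 * real n - 2)) * threshold (FF n x) t"
proof -
  let ?c = "2 * real n" and ?d = "2 * real n - 2" and ?M = "FF n x"
  have N: "?c * ?d * t = mass_type4 n x + mass_type235 n x" using assms(1) by (simp add: t_def)
  have "0 < t" using mass_type4_type235_bounds[OF assms(1,2)] assms(1) by (simp add: t_def)
  moreover have "?c * threshold ?M (1 / ?c) \<le> 1 - ?c * ?d * t"
    using mass_type1_lower[OF assms(1,2)] mass_types_sum[OF assms(2)] N by linarith
  moreover have "0 < ?M" using FF_gt_1[OF assms(1,2)] by simp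
  ultimately have "t \<le> threshold ?M (1 - 1 / ?c) + ?d * threshold ?M t"
    using exists_FF_less[OF assms(1)] minimal by (meson not_less)
  then have "?c * ?d * t \<le> ?c * ?d * (threshold ?M (1 - 1 / ?c) + ?d * threshold ?M t)"
    using assms(1) by (intro mult_left_mono) simp_all
  also have "\<dots> = ?c * ?d * threshold ?M (1 - 1 / ?c) + ?d * (?c * ?d) * threshold ?M t"
    by (simp add: algebra_simps)
  finally show "mass_type4 n x \<le> ?c * ?d * threshold ?M (1 - 1 / ?c)"
    and "mass_type235 n x \<le> ?d * (?c * ?d) * threshold ?M t"
    using mass_type4_lower(1)[OF assms(1,2)] mass_type235_lower(1)[OF assms(1,2), folded t_def] N
    by linarith+
qed

lemma constant_on_types:
  assumes "2 \<le> n" "x \<in> Delta n"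
    and type1: "\<And>l. l \<in> letters n \<Longrightarrow> x [l,l] = a"
    and type2: "\<And>l m. l \<in> letters n \<Longrightarrow> m \<in> other_letters n l \<Longrightarrow> x [l,m,m] = b"
    and type35: "\<And>l m k. l \<in> letters n \<Longrightarrow> m \<in> other_letters n l \<Longrightarrow>
      k \<in> other_letters n m - {inv_letter l} \<Longrightarrow> x [l,m,k] = b"
    and type4: "\<And>l m. l \<in> letters n \<Longrightarrow> m \<in> other_letters n l \<Longrightarrow> x [l,m,inv_letter l] = c"
  shows "\<exists>a b c :: real. a \<in> {0<..<1} \<and> b \<in> {0<..<1} \<and> c \<in> {0<..<1} \<and>
           (\<forall>\<psi>\<in>Psi n. type1 \<psi> \<longrightarrow> x \<psi> = a) \<and>
           (\<forall>\<psi>\<in>Psi n. (type2 \<psi> \<or> type3 \<psi> \<or> type5 \<psi>) \<longrightarrow> x \<psi> = b) \<and>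
           (\<forall>\<psi>\<in>Psi n. type4 \<psi> \<longrightarrow> x \<psi> = c)"
proof (intro exI conjI ballI impI)
  define l where "l = (1::nat, 1::int)"
  define m where "m = (2::nat, 1::int)"
  have l: "l \<in> letters n" and m: "m \<in> other_letters n l"
    using assms(1) unfolding l_def m_def letters_def other_letters_def sgns_def by auto
  have "x w \<in> {0<..<1}" if "w \<in> Psi n" for w
    using Delta_pos[OF assms(2) that] Delta_less_1[OF assms(2) that] by simp
  then show "a \<in> {0<..<1}" "b \<in> {0<..<1}" "c \<in> {0<..<1}"
    using word1_in_Psi[OF l] word2_in_Psi[OF l m]
      word3_in_Psi[OF l m inv_letter_in_other_letters[OF l m]]
      type1[OF l] type2[OF l m] type4[OF l m] by auto
next
  fix \<psi> assume "\<psi> \<in> Psi n" "type1 \<psi>"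
  then show "x \<psi> = a" by (cases rule: Psi_cases) (auto simp: type1 types_word3)
next
  fix \<psi> assume "\<psi> \<in> Psi n" and type: "type2 \<psi> \<or> type3 \<psi> \<or> type5 \<psi>"
  then show "x \<psi> = b"
  proof (cases rule: Psi_cases)
    case (word3 l m k)
    have "k \<noteq> inv_letter l"
      using type word3 inv_letter_neq[OF word3(1)]
      by (auto simp: types_word3 other_letters_def inv_letter_def)
    then show ?thesis using type35 word3 by simp
  qed (use type type2 in \<open>auto simp: types_word2\<close>)
next
  fix \<psi> assume "\<psi> \<in> Psi n" and type: "type4 \<psi>"
  then show "x \<psi> = c"
  proof (cases rule: Psi_cases)
    case (word3 l m k)
    then show ?thesis using type type4 by (simp add: types_word3)
  qed (use type in \<open>auto simp: types_word2 types_word3 other_letters_def inv_letter_def\<close>)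
qed

theorem lemma5p8:
  fixes n :: nat and xs :: "word \<Rightarrow> real"
  assumes "n \<ge> 2"
    and "xs \<in> Delta n"
    and "FF n xs = (INF x\<in>Delta n. FF n x)"
  shows "\<exists>a b c :: real. a \<in> {0<..<1} \<and> b \<in> {0<..<1} \<and> c \<in> {0<..<1} \<and>
           (\<forall>\<psi>\<in>Psi n. type1 \<psi> \<longrightarrow> xs \<psi> = a) \<and>
           (\<forall>\<psi>\<in>Psi n. (type2 \<psi> \<or> type3 \<psi> \<or> type5 \<psi>) \<longrightarrow> xs \<psi> = b) \<and>
           (\<forall>\<psi>\<in>Psi n. type4 \<psi> \<longrightarrow> xs \<psi> = c)"
proof -
  let ?c = "2 * real n" and ?d = "2 * real n - 2"
  define t where "t = (mass_type4 n xs + mass_type235 n xs) / (?c * ?d)"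
  have "bdd_below (FF n ` Delta n)"
    using FF_gt_1[OF assms(1)] by (intro bdd_belowI2[of _ 1]) (simp add: less_imp_le)
  then have "FF n xs \<le> FF n y" if "y \<in> Delta n" for y
    using cINF_lower[OF _ that] assms(3) by simp
  note tight = minimizer_mass_bounds[OF assms(1,2) this, folded t_def]
  note type4 = mass_type4_lower(2)[OF assms(1,2) tight(1)]
    and type235 = mass_type235_lower(2)[OF assms(1,2), folded t_def, OF tight(2)]
  have "xs [l,l] = 1 / ?c - ?d * t" if "l \<in> letters n" for l
    using mass_S1_split[of n xs l] type4 type235 card_other_letters[OF that] that by simp
  with type4 type235 show ?thesis
    by (intro constant_on_types[OF assms(1,2)]) auto
qed

end
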